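(* For any group $\Gamma$ we have $\eta(\Gamma)=1-1/\mathrm{Lit}(\Gamma)$.
   Context: $T_1(\Gamma)$ is the space of all $f\colon\Gamma\to\mathbf{C}$ for which there exist $f_1,f_2\colon\Gamma\times\Gamma\to\mathbf{C}$ with $f(x^{-1}y)=f_1(x,y)+f_2(x,y)$ for all $x,y$, $\sup_x\sum_y|f_1(x,y)|<\infty$, $\sup_y\sum_x|f_2(x,y)|<\infty$; $\mathrm{Lit}(\Gamma)=\inf\{p>0:T_1(\Gamma)\subseteq\ell^p(\Gamma)\}\in[0,\infty]$ (with $1/0=\infty$, $1/\infty=0$). For a finite symmetric $S\subseteq\Gamma$, $\mathrm{Cay}(\Gamma,S)$ is the (possibly disconnected) graph with vertex set $\Gamma$ and an edge between $g$ and $gs$ for each $s\in S$. For finite $F\subseteq\Gamma$, $\partial_S F$ is the set of edges joining $F$ to $\Gamma\setminus F$. The Cheeger constant is $h(\Gamma,S)=\inf_F|\partial_SF|/|F|$ over non-empty finite $F$, and $e(\Gamma,S)=1-h(\Gamma,S)/|S|$. Define $\eta(\Gamma)=-\liminf_S \frac{\ln e(\Gamma,S)}{\ln|S|}$, where the liminf is over the directed set of finite symmetric subsets ordered by inclusion, $\liminf_S f(S)=\sup_S\inf_{S'\supseteq S}f(S')$; by convention $\eta(\Gamma)=-\infty$ if $\Gamma$ is finite. *)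

theory Defs
  imports "HOL-Analysis.Analysis"
begin

text \<open>The group \<Gamma> is a type of class group_add; the group law is written additively,
  so x^{-1} y becomes (- x + y), and g s becomes g + s.\<close>

definition T1 :: "'a::group_add itself \<Rightarrow> ('a \<Rightarrow> complex) set" where
  "T1 G = {f. \<exists>f1 f2.
      (\<forall>x y. f (- x + y) = f1 x y + f2 x y) \<and>
      (\<exists>C. \<forall>x. (\<lambda>y. norm (f1 x y)) summable_on UNIV \<and> (\<Sum>\<^sub>\<infinity>y. norm (f1 x y)) \<le> C) \<and>
      (\<exists>C. \<forall>y. (\<lambda>x. norm (f2 x y)) summable_on UNIV \<and> (\<Sum>\<^sub>\<infinity>x. norm (f2 x y)) \<le> C)}"

definition lp_space :: "real \<Rightarrow> ('a \<Rightarrow> complex) set" where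
  "lp_space p = {f. (\<lambda>x. norm (f x) powr p) summable_on UNIV}"

definition Lit :: "'a::group_add itself \<Rightarrow> ereal" where
  "Lit G = Inf (ereal ` {p. p > 0 \<and> T1 G \<subseteq> lp_space p})"

definition fin_sym_subsets :: "'a::group_add itself \<Rightarrow> 'a set set" where
  "fin_sym_subsets G = {S. finite S \<and> (\<forall>s\<in>S. - s \<in> S)}"

text \<open>Edge boundary of F in Cay(\<Gamma>,S): edges (g, g+s), s \<in> S, joining F to its complement;
  edges are counted as pairs (g,s) with g \<in> F, g + s \<notin> F.\<close>
definition boundary :: "'a::group_add set \<Rightarrow> 'a set \<Rightarrow> ('a \<times> 'a) set" where
  "boundary S F = {(g, s). g \<in> F \<and> s \<in> S \<and> g + s \<notin> F}"

definition cheeger :: "'a::group_add set \<Rightarrow> real" where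
  "cheeger S = Inf {real (card (boundary S F)) / real (card F) | F. finite F \<and> F \<noteq> {}}"

definition e_const :: "'a::group_add set \<Rightarrow> real" where
  "e_const S = 1 - cheeger S / real (card S)"

definition eta :: "'a::group_add itself \<Rightarrow> ereal" where
  "eta G = (if finite (UNIV :: 'a set) then - \<infinity>
     else - (SUP S\<in>fin_sym_subsets G. INF S'\<in>{S'\<in>fin_sym_subsets G. S \<subseteq> S'}.
               ereal (ln (e_const S') / ln (real (card S')))))"

end

theory Submission
  imports Defs
begin

text \<open>For finite symmetric \<open>S\<close>, every finite set \<open>F\<close> spans at most \<open>|S| e(\<Gamma>, S) |F|\<close> arcs of
  \<open>Cay(\<Gamma>, S)\<close>, and a graph of this density can be oriented so that every vertex is charged with
  at most twice the density. Charging \<open>f(x\<^sup>-\<^sup>1 y)\<close> to the row or to the column according to such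
  an orientation shows that a function which is \<open>c\<close> on \<open>S\<close> lies in \<open>T\<^sub>1\<close> with constant of order
  \<open>c |S| e(\<Gamma>, S)\<close>. If \<open>e(\<Gamma>, S) \<le> |S|\<^sup>-\<^sup>\<theta>\<close> for cofinally many \<open>S\<close>, gluing such functions on
  disjoint pieces of a growing sequence of sets gives an element of \<open>T\<^sub>1\<close> outside \<open>\<ell>\<^sup>p\<close> whenever
  \<open>p (1 - \<theta>) < 1\<close>. Conversely, for \<open>f \<in> T\<^sub>1\<close> the arcs inside a level set \<open>{|f| \<ge> t}\<close> carry mass at
  most \<open>O(1/t)\<close> per vertex, which bounds the Cheeger constant of that level set from below; if
  \<open>e(\<Gamma>, S) \<ge> |S|\<^sup>-\<^sup>\<theta>\<close> eventually, this forces \<open>|{|f| \<ge> t}| = O(t\<^sup>-\<^sup>1\<^sup>/\<^sup>(\<^sup>1\<^sup>-\<^sup>\<theta>\<^sup>))\<close>, hence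
  \<open>f \<in> \<ell>\<^sup>p\<close> for \<open>p (1 - \<theta>) > 1\<close>.\<close>

section \<open>Cayley graphs and the Cheeger constant\<close>

definition inner_pairs :: "'a::group_add set \<Rightarrow> 'a set \<Rightarrow> ('a \<times> 'a) set" where
  "inner_pairs S F = {(g, s). g \<in> F \<and> s \<in> S \<and> g + s \<in> F}"

lemma inner_pairs_Un_boundary: "inner_pairs S F \<union> boundary S F = F \<times> S"
  and inner_pairs_Int_boundary: "inner_pairs S F \<inter> boundary S F = {}"
  by (auto simp: inner_pairs_def boundary_def)

lemma card_inner_pairs_add_boundary:
  assumes "finite S" "finite F"
  shows "card (inner_pairs S F) + card (boundary S F) = card F * card S"
  using card_Un_disjoint[of "inner_pairs S F" "boundary S F"] assms
    inner_pairs_Un_boundary[of S F] inner_pairs_Int_boundary[of S F]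
  by (metis card_cartesian_product finite_Un finite_cartesian_product)

lemma cheeger_set_bdd_below:
  "bdd_below {real (card (boundary S F)) / real (card F) | F. finite F \<and> F \<noteq> {}}"
  by (rule bdd_belowI[of _ 0]) auto

lemma cheeger_nonneg: "cheeger S \<ge> 0"
  unfolding cheeger_def by (rule cInf_greatest) (auto intro!: exI[of _ "{0}"])

lemma cheeger_le:
  "finite F \<Longrightarrow> F \<noteq> {} \<Longrightarrow> cheeger S \<le> real (card (boundary S F)) / real (card F)"
  unfolding cheeger_def by (rule cInf_lower[OF _ cheeger_set_bdd_below]) auto

lemma cheeger_greatest:
  "(\<And>F. finite F \<Longrightarrow> F \<noteq> {} \<Longrightarrow> c \<le> real (card (boundary S F)) / real (card F)) \<Longrightarrow> c \<le> cheeger S"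
  unfolding cheeger_def by (rule cInf_greatest) (auto intro!: exI[of _ "{0}"])

lemma card_inner_pairs_le_cheeger:
  assumes "finite S" "finite F" "F \<noteq> {}"
  shows "real (card (inner_pairs S F)) \<le> (real (card S) - cheeger S) * real (card F)"
proof -
  have "cheeger S * real (card F) \<le> real (card (boundary S F))"
    using cheeger_le[OF assms(2,3), of S] assms(2,3) by (simp add: field_simps card_gt_0_iff)
  moreover have "real (card (inner_pairs S F)) + real (card (boundary S F)) = real (card F) * real (card S)"
    using card_inner_pairs_add_boundary[OF assms(1,2)] by (metis of_nat_add of_nat_mult)
  ultimately show ?thesis by (simp add: algebra_simps)
qed

lemma cheeger_le_card_minus_one:
  assumes "finite S" "S \<noteq> {}" and sym: "\<forall>s\<in>S. - s \<in> S"
  shows "cheeger S \<le> real (card S) - 1"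
proof (cases "S = {0}")
  case True
  have "boundary S {0} = {}" using True by (auto simp: boundary_def)
  thus ?thesis using cheeger_le[of "{0::'a}" S] True by simp
next
  case False
  then obtain s where s: "s \<in> S" "s \<noteq> 0" using assms(2) by blast
  have "card (boundary S {0, s}) \<le> card (({0, s} \<times> S) - {(0, s), (s, - s)})"
    using s assms(1) by (intro card_mono) (auto simp: boundary_def)
  also have "\<dots> = 2 * card S - 2"
    using s sym assms(1) by (simp add: card_Diff_subset card_cartesian_product)
  finally have "real (card (boundary S {0, s})) \<le> real (2 * card S - 2)"
    by linarith
  moreover have "card S > 0" using s assms(1) card_gt_0_iff by blast
  ultimately have "real (card (boundary S {0, s})) \<le> 2 * real (card S) - 2"
    by (simp add: of_nat_diff)
  thus ?thesis using cheeger_le[of "{0, s}" S] s by simp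
qed

lemma e_const_le_one: "e_const S \<le> 1"
  unfolding e_const_def using cheeger_nonneg[of S] by simp

lemma e_const_ge_inverse_card:
  assumes "S \<in> fin_sym_subsets TYPE('a::group_add)" "S \<noteq> {}"
  shows "1 / real (card S) \<le> e_const S"
proof -
  have c: "real (card S) > 0" using assms by (simp add: fin_sym_subsets_def card_gt_0_iff)
  have "cheeger S / real (card S) \<le> (real (card S) - 1) / real (card S)"
    using cheeger_le_card_minus_one[of S] assms c by (simp add: fin_sym_subsets_def divide_right_mono)
  thus ?thesis unfolding e_const_def using c by (simp add: diff_divide_distrib)
qed

lemma e_const_pos:
  assumes "S \<in> fin_sym_subsets TYPE('a::group_add)" "S \<noteq> {}"
  shows "0 < e_const S"
proof -
  have "0 < 1 / real (card S)" using assms by (simp add: fin_sym_subsets_def card_gt_0_iff)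
  thus ?thesis using e_const_ge_inverse_card[OF assms] by linarith
qed

lemma card_mult_e_const: "card S > 0 \<Longrightarrow> real (card S) * e_const S = real (card S) - cheeger S"
  unfolding e_const_def by (simp add: field_simps)

section \<open>Orientations of Cayley graphs\<close>

text \<open>An orientation \<open>w\<close> charges each arc \<open>(x, y)\<close> of the Cayley graph (i.e. \<open>- x + y \<in> S\<close>) to its
  tail \<open>x\<close> if \<open>w (x, y)\<close> holds and to its head \<open>y\<close> otherwise; \<open>charge S G w z\<close> counts the arcs
  inside \<open>G\<close> charged to \<open>z\<close>.\<close>

definition charge :: "'a::group_add set \<Rightarrow> 'a set \<Rightarrow> ('a \<times> 'a \<Rightarrow> bool) \<Rightarrow> 'a \<Rightarrow> nat" where
  "charge S G w z = card {y \<in> G. - z + y \<in> S \<and> w (z, y)} + card {x \<in> G. - x + z \<in> S \<and> \<not> w (x, z)}"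

lemma out_neighbours_eq: "{y. - z + y \<in> S} = (\<lambda>s. z + s) ` (S :: 'a::group_add set)"
proof (intro set_eqI iffI)
  fix y assume "y \<in> {y. - z + y \<in> S}"
  thus "y \<in> (\<lambda>s. z + s) ` S" by (intro image_eqI[of _ _ "- z + y"]) simp_all
qed auto

lemma in_neighbours_eq: "{x. - x + z \<in> S} = (\<lambda>s. z + - s) ` (S :: 'a::group_add set)"
proof (intro set_eqI iffI)
  fix x assume "x \<in> {x. - x + z \<in> S}"
  thus "x \<in> (\<lambda>s. z + - s) ` S" by (intro image_eqI[of _ _ "- x + z"]) (simp_all add: minus_add)
qed (auto simp: minus_add add.assoc)

lemma sum_card_inner_neighbours:
  assumes "finite S" "finite G"
  shows "(\<Sum>g\<in>G. card {s \<in> S. g + s \<in> G}) = card (inner_pairs S G)"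
proof -
  have "inner_pairs S G = Sigma G (\<lambda>g. {s \<in> S. g + s \<in> G})"
    by (auto simp: inner_pairs_def)
  thus ?thesis using assms by (simp add: card_SigmaI)
qed

lemma card_out_neighbours:
  "card {y \<in> G. - x + y \<in> S} = card {s \<in> S. x + s \<in> (G :: 'a::group_add set)}"
proof -
  have "{y \<in> G. - x + y \<in> S} = (\<lambda>s. x + s) ` {s \<in> S. x + s \<in> G}"
    by (auto intro: image_eqI[of _ _ "- x + _"])
  thus ?thesis by (simp add: card_image inj_on_def)
qed

lemma card_in_neighbours_le:
  assumes "finite S" "\<forall>s\<in>S. - s \<in> S"
  shows "card {a \<in> G. - a + x \<in> S} \<le> card {s \<in> S. x + s \<in> (G :: 'a::group_add set)}"
proof (rule card_inj_on_le[where f = "\<lambda>a. - x + a"])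
  show "(\<lambda>a. - x + a) ` {a \<in> G. - a + x \<in> S} \<subseteq> {s \<in> S. x + s \<in> G}"
  proof
    fix t assume "t \<in> (\<lambda>a. - x + a) ` {a \<in> G. - a + x \<in> S}"
    then obtain a where a: "a \<in> G" "- a + x \<in> S" "t = - x + a" by blast
    have "- (- a + x) = t" using a(3) by (simp add: minus_add)
    thus "t \<in> {s \<in> S. x + s \<in> G}" using a assms(2) by force
  qed
qed (use assms(1) in \<open>auto simp: inj_on_def\<close>)

text \<open>A sparse finite graph has a vertex of low degree; charging all its arcs to it and orienting the
  rest inductively keeps every charge below twice the density.\<close>

lemma finite_orientation:
  assumes "finite S" "\<forall>s\<in>S. - s \<in> S"
    and sparse: "\<And>F. finite F \<Longrightarrow> F \<noteq> {} \<Longrightarrow> real (card (inner_pairs S F)) \<le> d * real (card F)"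
    and "finite G"
  shows "\<exists>w. \<forall>z\<in>G. real (charge S G w z) \<le> 2 * d"
  using \<open>finite G\<close>
proof (induction G rule: finite_psubset_induct)
  case (psubset G)
  show ?case
  proof (cases "G = {}")
    case False
    have "\<exists>x\<in>G. real (card {s \<in> S. x + s \<in> G}) \<le> d"
    proof (rule ccontr)
      assume "\<not> ?thesis"
      hence "(\<Sum>g\<in>G. d) < (\<Sum>g\<in>G. real (card {s \<in> S. g + s \<in> G}))"
        using psubset.hyps False by (intro sum_strict_mono) auto
      thus False
        using sparse[OF psubset.hyps False] sum_card_inner_neighbours[OF assms(1) psubset.hyps]
        by (simp flip: of_nat_sum add: algebra_simps)
    qed
    then obtain x where x: "x \<in> G" "real (card {s \<in> S. x + s \<in> G}) \<le> d" by blast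
    obtain w' where w': "\<forall>z\<in>G - {x}. real (charge S (G - {x}) w' z) \<le> 2 * d"
      using psubset.IH[of "G - {x}"] x(1) by blast
    define w where "w = (\<lambda>(a, b). if a = x then True else if b = x then False else w' (a, b))"
    have "real (charge S G w z) \<le> 2 * d" if "z \<in> G" for z
    proof (cases "z = x")
      case True
      have "card {a \<in> G. - a + x \<in> S \<and> \<not> w (a, x)} \<le> card {a \<in> G. - a + x \<in> S}"
        using psubset.hyps by (intro card_mono) auto
      hence "charge S G w z \<le> 2 * card {s \<in> S. x + s \<in> G}"
        using True card_out_neighbours[of G x S] card_in_neighbours_le[OF assms(1,2), of G x]
        by (simp add: charge_def w_def)
      thus ?thesis using x(2) by linarith
    next
      case False
      hence "charge S G w z = charge S (G - {x}) w' z"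
        unfolding charge_def w_def
        by (intro arg_cong2[where f = "(+)"] arg_cong[where f = card]) auto
      thus ?thesis using w' False that by auto
    qed
    thus ?thesis by blast
  qed simp
qed

lemma bool_assignment_compactness:
  fixes Q :: "'z \<Rightarrow> ('i \<Rightarrow> bool) \<Rightarrow> bool" and N :: "'z \<Rightarrow> 'i set"
  assumes finN: "\<And>z. finite (N z)"
    and local: "\<And>z w1 w2. (\<And>i. i \<in> N z \<Longrightarrow> w1 i = w2 i) \<Longrightarrow> Q z w1 \<Longrightarrow> Q z w2"
    and finite_sat: "\<And>Z. finite Z \<Longrightarrow> \<exists>w. \<forall>z\<in>Z. Q z w"
  shows "\<exists>w. \<forall>z. Q z w"
proof -
  define X where "X = product_topology (\<lambda>_::'i. discrete_topology (UNIV::bool set)) UNIV"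
  have top: "topspace X = UNIV"
    by (auto simp: X_def PiE_def extensional_def)
  have compact: "compact_space X"
    unfolding X_def by (simp add: compact_space_product_topology compact_space_discrete_topology)
  have closed: "closedin X {w. Q z w}" for z
  proof -
    have "openin X (UNIV - {w. Q z w})"
    proof (subst openin_subopen, intro ballI)
      fix w0 assume w0: "w0 \<in> UNIV - {w. Q z w}"
      define U where "U = (\<Inter>i\<in>N z. {w \<in> topspace X. w i \<in> {w0 i}})"
      have "openin X {w \<in> topspace X. w i \<in> {w0 i}}" for i
        by (rule openin_continuous_map_preimage[where Y="discrete_topology UNIV"])
           (auto simp: X_def intro: continuous_map_product_projection)
      hence "openin X (topspace X \<inter> U)"
        unfolding U_def using finN by (intro openin_Int_Inter) auto
      moreover have "topspace X \<inter> U \<subseteq> UNIV - {w. Q z w}"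
        using w0 local[of z _ w0] by (auto simp: U_def top)
      ultimately show "\<exists>T. openin X T \<and> w0 \<in> T \<and> T \<subseteq> UNIV - {w. Q z w}"
        by (intro exI[of _ "topspace X \<inter> U"]) (auto simp: U_def top)
    qed
    thus ?thesis by (simp add: closedin_def top)
  qed
  have fip: "\<Inter>F \<noteq> {}" if F: "finite F" "F \<subseteq> range (\<lambda>z. {w. Q z w})" for F
  proof -
    obtain Z where "finite Z" "F = (\<lambda>z. {w. Q z w}) ` Z"
      using finite_subset_image[OF F] by blast
    moreover obtain w where "\<forall>z\<in>Z. Q z w" using finite_sat[OF \<open>finite Z\<close>] by blast
    ultimately have "w \<in> \<Inter>F" by blast
    thus ?thesis by blast
  qed
  have "\<Inter>(range (\<lambda>z. {w. Q z w})) \<noteq> {}"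
    by (rule compact[unfolded compact_space_fip, rule_format]) (use closed fip in auto)
  thus ?thesis by auto
qed

lemma orientation:
  assumes "finite S" "\<forall>s\<in>S. - s \<in> S"
    and sparse: "\<And>F. finite F \<Longrightarrow> F \<noteq> {} \<Longrightarrow> real (card (inner_pairs S F)) \<le> d * real (card F)"
  shows "\<exists>w. \<forall>z. real (charge S UNIV w z) \<le> 2 * d"
proof (rule bool_assignment_compactness
    [where N = "\<lambda>z. Pair z ` {y. - z + y \<in> S} \<union> (\<lambda>x. (x, z)) ` {x. - x + z \<in> S}"])
  show "finite (Pair z ` {y. - z + y \<in> S} \<union> (\<lambda>x. (x, z)) ` {x. - x + z \<in> S})" for z
    using assms(1) by (simp add: out_neighbours_eq in_neighbours_eq)
  show "real (charge S UNIV w2 z) \<le> 2 * d"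
    if "\<And>i. i \<in> Pair z ` {y. - z + y \<in> S} \<union> (\<lambda>x. (x, z)) ` {x. - x + z \<in> S} \<Longrightarrow> w1 i = w2 i"
      and "real (charge S UNIV w1 z) \<le> 2 * d" for z w1 w2
  proof -
    have "charge S UNIV w1 z = charge S UNIV w2 z"
      unfolding charge_def using that(1)
      by (intro arg_cong2[where f = "(+)"] arg_cong[where f = card]) auto
    thus ?thesis using that(2) by simp
  qed
  show "\<exists>w. \<forall>z\<in>Z. real (charge S UNIV w z) \<le> 2 * d" if "finite Z" for Z
  proof -
    obtain w where w: "\<forall>z\<in>Z. real (charge S Z w z) \<le> 2 * d"
      using finite_orientation[OF assms \<open>finite Z\<close>] by blast
    \<comment> \<open>arcs leaving \<open>Z\<close> are charged to their endpoint outside \<open>Z\<close>\<close>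
    define v where "v = (\<lambda>(a, b). if a \<in> Z \<and> b \<in> Z then w (a, b) else a \<notin> Z)"
    have "charge S UNIV v z = charge S Z w z" if "z \<in> Z" for z
      unfolding charge_def using that
      by (intro arg_cong2[where f = "(+)"] arg_cong[where f = card]) (auto simp: v_def)
    thus ?thesis using w by (intro exI[of _ v]) auto
  qed
qed

lemma orientation_charge_le_cheeger:
  assumes "S \<in> fin_sym_subsets TYPE('a::group_add)"
  shows "\<exists>w. \<forall>z. real (charge S UNIV w z) \<le> 2 * (real (card S) - cheeger S)"
  using assms card_inner_pairs_le_cheeger[of S]
  by (intro orientation) (auto simp: fin_sym_subsets_def)

lemma card_out_le_charge:
  assumes "finite (S :: 'a::group_add set)"
  shows "card {y \<in> Y. - x + y \<in> S \<and> w (x, y)} \<le> charge S UNIV w x"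
proof -
  have "card {y \<in> Y. - x + y \<in> S \<and> w (x, y)} \<le> card {y. - x + y \<in> S \<and> w (x, y)}"
    using assms by (intro card_mono) (auto simp: out_neighbours_eq intro: finite_subset)
  thus ?thesis by (simp add: charge_def)
qed

lemma card_in_le_charge:
  assumes "finite (S :: 'a::group_add set)"
  shows "card {x \<in> X. - x + y \<in> S \<and> \<not> w (x, y)} \<le> charge S UNIV w y"
proof -
  have "card {x \<in> X. - x + y \<in> S \<and> \<not> w (x, y)} \<le> card {x. - x + y \<in> S \<and> \<not> w (x, y)}"
    using assms by (intro card_mono) (auto simp: in_neighbours_eq intro: finite_subset)
  thus ?thesis by (simp add: charge_def)
qed

section \<open>Functions in \<open>T\<^sub>1\<close> outside \<open>\<ell>\<^sup>p\<close>\<close>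

lemma T1I:
  fixes f :: "'a::group_add \<Rightarrow> complex"
  assumes "\<And>x y. f (- x + y) = f1 x y + f2 x y"
    and rows: "\<And>x Y. finite Y \<Longrightarrow> (\<Sum>y\<in>Y. norm (f1 x y)) \<le> C"
    and columns: "\<And>y X. finite X \<Longrightarrow> (\<Sum>x\<in>X. norm (f2 x y)) \<le> C"
  shows "f \<in> T1 TYPE('a)"
proof -
  have "(\<lambda>y. norm (f1 x y)) summable_on UNIV" "(\<Sum>\<^sub>\<infinity>y. norm (f1 x y)) \<le> C" for x
    using rows by (auto intro!: nonneg_bdd_above_summable_on bdd_aboveI[of _ C] infsum_le_finite_sums)
  moreover have "(\<lambda>x. norm (f2 x y)) summable_on UNIV" "(\<Sum>\<^sub>\<infinity>x. norm (f2 x y)) \<le> C" for y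
    using columns by (auto intro!: nonneg_bdd_above_summable_on bdd_aboveI[of _ C] infsum_le_finite_sums)
  ultimately show ?thesis unfolding T1_def using assms(1) by blast
qed

lemma sum_le_by_geometric_layers:
  fixes r :: "'b \<Rightarrow> real" and \<kappa> :: "'b \<Rightarrow> nat"
  assumes "finite Y" "0 \<le> c" "0 \<le> \<rho>" "\<rho> < 1"
    and layers: "\<And>k. (\<Sum>y\<in>{y \<in> Y. \<kappa> y = k}. r y) \<le> c * \<rho> ^ k"
  shows "(\<Sum>y\<in>Y. r y) \<le> c / (1 - \<rho>)"
proof -
  have "(\<Sum>y\<in>Y. r y) = (\<Sum>k\<in>\<kappa> ` Y. \<Sum>y\<in>{y \<in> Y. \<kappa> y = k}. r y)"
    using assms(1) by (rule sum.image_gen)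
  also have "\<dots> \<le> c * (\<Sum>k\<in>\<kappa> ` Y. \<rho> ^ k)"
    unfolding sum_distrib_left by (intro sum_mono layers)
  also have "(\<Sum>k\<in>\<kappa> ` Y. \<rho> ^ k) \<le> (\<Sum>k. \<rho> ^ k)"
    using assms by (intro sum_le_suminf) (auto simp: summable_geometric)
  also have "(\<Sum>k. \<rho> ^ k) = 1 / (1 - \<rho>)"
    using suminf_geometric[of \<rho>] assms by simp
  finally show ?thesis using assms(2) by (simp add: mult_left_mono)
qed

lemma sum_two_valued_le:
  fixes r :: "'b \<Rightarrow> real"
  assumes "finite Y" "0 \<le> c" "\<And>y. y \<in> Y \<Longrightarrow> r y = 0 \<or> (N y \<and> r y = c)"
  shows "(\<Sum>y\<in>Y. r y) \<le> c * real (card {y \<in> Y. N y})"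
proof -
  have "(\<Sum>y\<in>Y. r y) \<le> (\<Sum>y\<in>Y. if N y then c else 0)"
    using assms by (intro sum_mono) fastforce
  also have "\<dots> = c * real (card {y \<in> Y. N y})"
    using sum.inter_filter[OF assms(1), of "\<lambda>_. c", symmetric] by simp
  finally show ?thesis .
qed

lemma layered_sum_le:
  fixes r :: "'b \<Rightarrow> real" and \<kappa> :: "'b \<Rightarrow> nat"
  assumes "finite Y" "\<And>k. 0 \<le> c k" "\<And>k. c k * real (card {y \<in> Y. N k y}) \<le> 2 * (1/2) ^ k"
    and "\<And>y. y \<in> Y \<Longrightarrow> r y = 0 \<or> (N (\<kappa> y) y \<and> r y = c (\<kappa> y))"
  shows "(\<Sum>y\<in>Y. r y) \<le> 4"
proof -
  have "(\<Sum>y\<in>Y. r y) \<le> 2 / (1 - 1/2)"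
  proof (rule sum_le_by_geometric_layers[where \<kappa> = \<kappa>])
    fix k
    have "(\<Sum>y\<in>{y \<in> Y. \<kappa> y = k}. r y) \<le> c k * real (card {y \<in> {y \<in> Y. \<kappa> y = k}. N k y})"
      using assms(1,2,4) by (intro sum_two_valued_le) auto
    also have "\<dots> \<le> c k * real (card {y \<in> Y. N k y})"
      using assms(1,2) by (intro mult_left_mono of_nat_mono card_mono) auto
    finally show "(\<Sum>y\<in>{y \<in> Y. \<kappa> y = k}. r y) \<le> 2 * (1/2) ^ k" using assms(3)[of k] by linarith
  qed (use assms(1) in auto)
  thus ?thesis by simp
qed

text \<open>Split \<open>f (- x + y)\<close> into row and column part according to the orientation of the arc
  \<open>(x, y)\<close> in \<open>Cay(\<Gamma>, S k)\<close>, where \<open>- x + y \<in> T k\<close>.\<close>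

lemma layered_function_in_T1:
  fixes f :: "'a::group_add \<Rightarrow> complex" and S T :: "nat \<Rightarrow> 'a set"
  assumes S: "\<And>k. S k \<in> fin_sym_subsets TYPE('a)" and TS: "\<And>k. T k \<subseteq> S k"
    and disj: "disjoint_family T"
    and c: "\<And>k. 0 \<le> c k" "\<And>k. c k * (real (card (S k)) - cheeger (S k)) \<le> (1/2) ^ k"
    and f_on: "\<And>k z. z \<in> T k \<Longrightarrow> norm (f z) = c k"
    and f_off: "\<And>z. z \<notin> (\<Union>k. T k) \<Longrightarrow> f z = 0"
  shows "f \<in> T1 TYPE('a)"
proof -
  obtain w where w: "\<And>k z. real (charge (S k) UNIV (w k) z) \<le> 2 * (real (card (S k)) - cheeger (S k))"
    using orientation_charge_le_cheeger[OF S] by metis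
  have finS: "finite (S k)" for k using S[of k] by (simp add: fin_sym_subsets_def)
  define idx where "idx z = (THE k. z \<in> T k)" for z
  have idx: "idx z = k" if "z \<in> T k" for z k
    unfolding idx_def using that disj by (auto simp: disjoint_family_on_def)
  have charged: "c k * real (charge (S k) UNIV (w k) z) \<le> 2 * (1/2) ^ k" for k z
  proof -
    have "c k * real (charge (S k) UNIV (w k) z) \<le> 2 * (c k * (real (card (S k)) - cheeger (S k)))"
      using mult_left_mono[OF w[of k z] c(1)[of k]] by (simp add: algebra_simps)
    thus ?thesis using c(2)[of k] by linarith
  qed
  have two_valued: "norm (f z) = 0 \<or> (z \<in> S (idx z) \<and> norm (f z) = c (idx z))" for z
  proof (cases "z \<in> (\<Union>k. T k)")
    case True
    then obtain k where "z \<in> T k" by blast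
    thus ?thesis using f_on idx TS by blast
  qed (simp add: f_off)
  define f1 where "f1 x y = (if w (idx (- x + y)) (x, y) then f (- x + y) else 0)" for x y
  define f2 where "f2 x y = (if w (idx (- x + y)) (x, y) then 0 else f (- x + y))" for x y
  show ?thesis
  proof (rule T1I[of f f1 f2 4])
    show "f (- x + y) = f1 x y + f2 x y" for x y by (simp add: f1_def f2_def)
    show "(\<Sum>y\<in>Y. norm (f1 x y)) \<le> 4" if "finite Y" for x Y
    proof (rule layered_sum_le[where \<kappa> = "\<lambda>y. idx (- x + y)"
          and N = "\<lambda>k y. - x + y \<in> S k \<and> w k (x, y)"])
      show "c k * real (card {y \<in> Y. - x + y \<in> S k \<and> w k (x, y)}) \<le> 2 * (1/2) ^ k" for k
        using mult_left_mono[OF of_nat_mono[OF card_out_le_charge[OF finS]] c(1)] charged[of k x]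
        by (meson order_trans)
      show "norm (f1 x y) = 0 \<or> ((- x + y \<in> S (idx (- x + y)) \<and> w (idx (- x + y)) (x, y))
          \<and> norm (f1 x y) = c (idx (- x + y)))" for y
        using two_valued[of "- x + y"] by (auto simp: f1_def)
    qed (use that c(1) in auto)
    show "(\<Sum>x\<in>X. norm (f2 x y)) \<le> 4" if "finite X" for y X
    proof (rule layered_sum_le[where \<kappa> = "\<lambda>x. idx (- x + y)"
          and N = "\<lambda>k x. - x + y \<in> S k \<and> \<not> w k (x, y)"])
      show "c k * real (card {x \<in> X. - x + y \<in> S k \<and> \<not> w k (x, y)}) \<le> 2 * (1/2) ^ k" for k
        using mult_left_mono[OF of_nat_mono[OF card_in_le_charge[OF finS]] c(1)] charged[of k y]
        by (meson order_trans)
      show "norm (f2 x y) = 0 \<or> ((- x + y \<in> S (idx (- x + y)) \<and> \<not> w (idx (- x + y)) (x, y))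
          \<and> norm (f2 x y) = c (idx (- x + y)))" for x
        using two_valued[of "- x + y"] by (auto simp: f2_def)
    qed (use that c(1) in auto)
  qed
qed

lemma cofinal_large_superset:
  assumes "infinite (UNIV :: 'a::group_add set)"
    and cofinal: "\<forall>S0\<in>fin_sym_subsets TYPE('a). \<exists>S\<in>fin_sym_subsets TYPE('a). S0 \<subseteq> S \<and> P S"
    and W: "W \<in> fin_sym_subsets TYPE('a)"
  shows "\<exists>S\<in>fin_sym_subsets TYPE('a). W \<subseteq> S \<and> P S \<and> n \<le> card S"
proof -
  obtain A :: "'a set" where A: "finite A" "card A = n"
    using infinite_arbitrarily_large[OF assms(1)] by blast
  have "W \<union> A \<union> uminus ` A \<in> fin_sym_subsets TYPE('a)"
    using W A by (auto simp: fin_sym_subsets_def)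
  then obtain S where S: "S \<in> fin_sym_subsets TYPE('a)" "W \<union> A \<union> uminus ` A \<subseteq> S" "P S"
    using cofinal by blast
  have "card A \<le> card S" using S by (intro card_mono) (auto simp: fin_sym_subsets_def)
  thus ?thesis using S A by auto
qed

text \<open>\<open>T k\<close> is the part of \<open>S k\<close> not covered by the earlier sets, which are small compared to
  \<open>S k\<close>.\<close>

lemma cofinal_disjoint_layers:
  fixes P :: "'a::group_add set \<Rightarrow> bool" and m :: "nat \<Rightarrow> nat"
  assumes "infinite (UNIV :: 'a::group_add set)"
    and cofinal: "\<forall>S0\<in>fin_sym_subsets TYPE('a). \<exists>S\<in>fin_sym_subsets TYPE('a). S0 \<subseteq> S \<and> P S"
  obtains S T where "\<And>k. S k \<in> fin_sym_subsets TYPE('a)" "\<And>k. P (S k)" "\<And>k. m k \<le> card (S k)"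
    and "\<And>k. T k \<subseteq> S k" "\<And>k. card (S k) \<le> 2 * card (T k)" "disjoint_family T"
proof -
  have "\<exists>W. \<forall>k. W k \<in> fin_sym_subsets TYPE('a) \<and>
      W k \<subseteq> W (Suc k) \<and> P (W (Suc k)) \<and> 2 * card (W k) + m k \<le> card (W (Suc k))"
  proof (rule dependent_nat_choice)
    show "\<exists>W. W \<in> fin_sym_subsets TYPE('a)"
      by (auto simp: fin_sym_subsets_def intro!: exI[of _ "{}"])
    fix W k assume "W \<in> fin_sym_subsets TYPE('a)"
    thus "\<exists>S. S \<in> fin_sym_subsets TYPE('a) \<and> W \<subseteq> S \<and> P S \<and> 2 * card W + m k \<le> card S"
      using cofinal_large_superset[OF assms] by blast
  qed
  then obtain W where W: "\<And>k. W k \<in> fin_sym_subsets TYPE('a)"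
    and step: "\<And>k. W k \<subseteq> W (Suc k) \<and> P (W (Suc k)) \<and> 2 * card (W k) + m k \<le> card (W (Suc k))"
    by blast
  have finW: "finite (W k)" for k using W[of k] by (simp add: fin_sym_subsets_def)
  have mono: "W j \<subseteq> W k" if "j \<le> k" for j k
    using lift_Suc_mono_le[of W, OF _ that] step by blast
  show thesis
  proof
    show "card (W (Suc k)) \<le> 2 * card (W (Suc k) - W k)" for k
    proof -
      have "card (W (Suc k) - W k) = card (W (Suc k)) - card (W k)"
        using step[of k] finW[of k] by (simp add: card_Diff_subset)
      thus ?thesis using step[of k] by arith
    qed
    show "disjoint_family (\<lambda>k. W (Suc k) - W k)"
      unfolding disjoint_family_on_def
    proof (intro ballI impI)
      fix j k :: nat assume "j \<noteq> k"
      hence "W (Suc (min j k)) \<subseteq> W (max j k)" by (intro mono) auto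
      thus "(W (Suc j) - W j) \<inter> (W (Suc k) - W k) = {}"
        by (cases "j \<le> k") (auto simp: min_def max_def)
    qed
  next
    show "m k \<le> card (W (Suc k))" for k using step[of k] by linarith
  qed (use W step in auto)
qed

lemma layer_mass_ge:
  fixes N p \<theta> :: real
  assumes N: "0 < N" and \<beta>: "0 < 1 - p * (1 - \<theta>)"
    and large: "(2 * real (Suc k) * 2 powr (real k * p)) powr (1 / (1 - p * (1 - \<theta>))) \<le> N"
  shows "real (Suc k) \<le> N / 2 * (2 powr (- real k) * N powr (\<theta> - 1)) powr p"
proof -
  define \<beta> where "\<beta> = 1 - p * (1 - \<theta>)"
  define X where "X = 2 * real (Suc k) * 2 powr (real k * p)"
  have "X = (X powr (1 / \<beta>)) powr \<beta>"
    using \<beta> by (simp add: \<beta>_def X_def powr_powr)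
  also have "\<dots> \<le> N powr \<beta>"
    using large \<beta> by (intro powr_mono2) (auto simp: \<beta>_def X_def)
  finally have X: "X \<le> N powr \<beta>" .
  have "real (Suc k) = 2 powr (- real k * p) * X / 2"
    by (simp add: X_def powr_minus field_simps)
  also have "\<dots> \<le> 2 powr (- real k * p) * N powr \<beta> / 2"
    using X by simp
  also have "N powr \<beta> = N * N powr ((\<theta> - 1) * p)"
  proof -
    have "N powr \<beta> = N powr 1 * N powr ((\<theta> - 1) * p)"
      unfolding \<beta>_def powr_add[symmetric] by (simp add: algebra_simps)
    thus ?thesis using N by simp
  qed
  also have "2 powr (- real k * p) * (N * N powr ((\<theta> - 1) * p)) / 2
      = N / 2 * (2 powr (- real k) * N powr (\<theta> - 1)) powr p"
    using N by (simp add: powr_mult powr_powr)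
  finally show ?thesis .
qed

lemma dyadic_weight_mult_density_le:
  assumes "0 < card S" "e_const S \<le> real (card S) powr (- \<theta>)"
  shows "2 powr (- real k) * real (card S) powr (\<theta> - 1) * (real (card S) - cheeger S) \<le> (1/2) ^ k"
proof -
  define N where "N = real (card S)"
  have N: "0 < N" using assms(1) by (simp add: N_def)
  have "real (card S) - cheeger S = N * e_const S"
    using card_mult_e_const[of S] assms(1) by (simp add: N_def)
  also have "\<dots> \<le> N * N powr (- \<theta>)"
    using assms(2) N by (intro mult_left_mono) (auto simp: N_def)
  also have "\<dots> = N powr (1 - \<theta>)"
    using N by (simp add: powr_mult_base)
  finally have "2 powr (- real k) * N powr (\<theta> - 1) * (real (card S) - cheeger S)
      \<le> 2 powr (- real k) * (N powr (\<theta> - 1) * N powr (1 - \<theta>))"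
    by (simp add: mult_left_mono mult.assoc)
  also have "\<dots> = (1/2) ^ k"
    using N by (simp add: powr_add[symmetric] powr_minus powr_realpow power_one_over inverse_eq_divide)
  finally show ?thesis by (simp add: N_def)
qed

text \<open>If \<open>e(\<Gamma>, S) \<le> |S|\<^sup>-\<^sup>\<theta>\<close> for cofinally many \<open>S\<close>, the layered function with weights
  \<open>2\<^sup>-\<^sup>k |S k|\<^sup>\<theta>\<^sup>-\<^sup>1\<close> lies in \<open>T\<^sub>1\<close>, while its \<open>p\<close>-th power sums to at least \<open>k + 1\<close> over \<open>T k\<close>.\<close>

lemma not_T1_subset_lp_of_cofinal:
  assumes "infinite (UNIV :: 'a::group_add set)"
    and p: "0 < p" "p * (1 - \<theta>) < 1"
    and cofinal: "\<forall>S0\<in>fin_sym_subsets TYPE('a). \<exists>S\<in>fin_sym_subsets TYPE('a).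
                   S0 \<subseteq> S \<and> e_const S \<le> real (card S) powr (- \<theta>)"
  shows "\<not> T1 TYPE('a) \<subseteq> lp_space p"
proof
  assume T1_lp: "T1 TYPE('a) \<subseteq> lp_space p"
  define X where "X k = (2 * real (Suc k) * 2 powr (real k * p)) powr (1 / (1 - p * (1 - \<theta>)))" for k
  define m where "m k = nat \<lceil>X k\<rceil> + 1" for k
  obtain S T where S: "\<And>k. S k \<in> fin_sym_subsets TYPE('a)"
    and e: "\<And>k. e_const (S k) \<le> real (card (S k)) powr (- \<theta>)" and large: "\<And>k. m k \<le> card (S k)"
    and TS: "\<And>k. T k \<subseteq> S k" and half: "\<And>k. card (S k) \<le> 2 * card (T k)"
    and disj: "disjoint_family T"
    using cofinal_disjoint_layers[OF assms(1) cofinal] by metis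
  define N where "N k = real (card (S k))" for k
  have N: "0 < N k" for k using large[of k] by (simp add: N_def m_def)
  have X: "X k \<le> N k" for k
    using real_nat_ceiling_ge[of "X k"] large[of k] by (simp add: N_def m_def)
  define c where "c k = 2 powr (- real k) * N k powr (\<theta> - 1)" for k
  have c: "0 < c k" for k using N[of k] by (simp add: c_def)
  define f where "f z = (if z \<in> (\<Union>k. T k) then complex_of_real (c (THE k. z \<in> T k)) else 0)" for z
  have f_on: "norm (f z) = c k" if "z \<in> T k" for z k
  proof -
    have "(THE k. z \<in> T k) = k" using that disj by (auto simp: disjoint_family_on_def)
    thus ?thesis using that c[of k] by (auto simp: f_def)
  qed
  have f_off: "f z = 0" if "z \<notin> (\<Union>k. T k)" for z
    using that by (simp add: f_def)
  have compensated: "c k * (real (card (S k)) - cheeger (S k)) \<le> (1/2) ^ k" for k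
    unfolding c_def N_def using N[of k] e[of k] by (intro dyadic_weight_mult_density_le) (simp_all add: N_def)
  have "f \<in> T1 TYPE('a)"
    using S TS disj c compensated f_on f_off
    by (intro layered_function_in_T1[where c = c]) (auto simp: less_imp_le)
  hence summable: "(\<lambda>z. norm (f z) powr p) summable_on UNIV"
    using T1_lp by (auto simp: lp_space_def)
  have "real (Suc k) \<le> (\<Sum>\<^sub>\<infinity>z. norm (f z) powr p)" for k
  proof -
    have "real (Suc k) \<le> N k / 2 * c k powr p"
      unfolding c_def using N[of k] p X[of k] by (intro layer_mass_ge) (simp_all add: X_def)
    also have "\<dots> \<le> real (card (T k)) * c k powr p"
      using half[of k] by (intro mult_right_mono) (auto simp: N_def)
    also have "\<dots> = (\<Sum>z\<in>T k. norm (f z) powr p)"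
      using f_on by simp
    also have "\<dots> \<le> (\<Sum>\<^sub>\<infinity>z. norm (f z) powr p)"
      using summable TS[of k] S[of k]
      by (intro finite_sum_le_infsum) (auto simp: fin_sym_subsets_def intro: finite_subset)
    finally show ?thesis .
  qed
  from this[of "nat \<lceil>\<Sum>\<^sub>\<infinity>z. norm (f z) powr p\<rceil>"] show False by linarith
qed

section \<open>Inclusion of \<open>T\<^sub>1\<close> in \<open>\<ell>\<^sup>p\<close>\<close>

lemma T1_double_sum_bound:
  fixes f :: "'a::group_add \<Rightarrow> complex"
  assumes "f \<in> T1 TYPE('a)"
  obtains C where "0 \<le> C" "\<And>F. finite F \<Longrightarrow> (\<Sum>x\<in>F. \<Sum>y\<in>F. norm (f (- x + y))) \<le> C * real (card F)"
proof -
  obtain f1 f2 C1 C2 where eq: "\<And>x y. f (- x + y) = f1 x y + f2 x y"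
    and s1: "\<And>x. (\<lambda>y. norm (f1 x y)) summable_on UNIV" and b1: "\<And>x. (\<Sum>\<^sub>\<infinity>y. norm (f1 x y)) \<le> C1"
    and s2: "\<And>y. (\<lambda>x. norm (f2 x y)) summable_on UNIV" and b2: "\<And>y. (\<Sum>\<^sub>\<infinity>x. norm (f2 x y)) \<le> C2"
    using assms unfolding T1_def by blast
  define C where "C = max 0 (max C1 C2)"
  have "(\<Sum>x\<in>F. \<Sum>y\<in>F. norm (f (- x + y))) \<le> 2 * C * real (card F)" if F: "finite F" for F
  proof -
    have rows: "(\<Sum>y\<in>F. norm (f1 x y)) \<le> C" for x
      using finite_sum_le_infsum[OF s1[of x] F] b1[of x] by (simp add: C_def)
    have columns: "(\<Sum>x\<in>F. norm (f2 x y)) \<le> C" for y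
      using finite_sum_le_infsum[OF s2[of y] F] b2[of y] by (simp add: C_def)
    have "(\<Sum>x\<in>F. \<Sum>y\<in>F. norm (f (- x + y))) \<le> (\<Sum>x\<in>F. \<Sum>y\<in>F. norm (f1 x y) + norm (f2 x y))"
      unfolding eq by (intro sum_mono norm_triangle_ineq)
    also have "\<dots> = (\<Sum>x\<in>F. \<Sum>y\<in>F. norm (f1 x y)) + (\<Sum>y\<in>F. \<Sum>x\<in>F. norm (f2 x y))"
      by (simp add: sum.distrib sum.swap[of "\<lambda>x y. norm (f2 x y)" F F])
    also have "\<dots> \<le> (\<Sum>x\<in>F. C) + (\<Sum>y\<in>F. C)"
      using rows columns by (intro add_mono sum_mono)
    finally show ?thesis by simp
  qed
  thus thesis by (intro that[of "2 * C"]) (auto simp: C_def)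
qed

text \<open>Each pair \<open>(x, s) \<in> inner_pairs A F\<close> is the difference \<open>- x + (x + s)\<close> of two points of \<open>F\<close>,
  and \<open>- s\<close> is the difference \<open>- (x + s) + x\<close>.\<close>

lemma card_inner_pairs_level_le:
  fixes f :: "'a::group_add \<Rightarrow> complex"
  assumes C: "\<And>F. finite F \<Longrightarrow> (\<Sum>x\<in>F. \<Sum>y\<in>F. norm (f (- x + y))) \<le> C * real (card F)"
    and F: "finite F" and A: "finite A" and level: "\<And>s. s \<in> A \<Longrightarrow> t \<le> norm (f s) + norm (f (- s))"
  shows "t * real (card (inner_pairs A F)) \<le> 2 * C * real (card F)"
proof -
  define P where "P = inner_pairs A F"
  define G where "G = (\<lambda>(x, y). norm (f (- x + y)))"
  have FF: "(\<Sum>q\<in>F \<times> F. G q) \<le> C * real (card F)"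
    using C[OF F] by (simp add: G_def sum.cartesian_product)
  have G_nonneg: "G q \<ge> 0" for q by (auto simp: G_def split: prod.splits)
  have "(\<Sum>q\<in>P. norm (f (snd q))) = (\<Sum>q\<in>(\<lambda>(x, s). (x, x + s)) ` P. G q)"
    by (subst sum.reindex) (auto simp: inj_on_def G_def intro!: sum.cong)
  also have "\<dots> \<le> (\<Sum>q\<in>F \<times> F. G q)"
    using F G_nonneg by (intro sum_mono2) (auto simp: P_def inner_pairs_def)
  finally have forward: "(\<Sum>q\<in>P. norm (f (snd q))) \<le> C * real (card F)" using FF by linarith
  have "(\<Sum>q\<in>P. norm (f (- snd q))) = (\<Sum>q\<in>(\<lambda>(x, s). (x + s, x)) ` P. G q)"
    by (subst sum.reindex) (auto simp: inj_on_def G_def minus_add add.assoc intro!: sum.cong)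
  also have "\<dots> \<le> (\<Sum>q\<in>F \<times> F. G q)"
    using F G_nonneg by (intro sum_mono2) (auto simp: P_def inner_pairs_def)
  finally have backward: "(\<Sum>q\<in>P. norm (f (- snd q))) \<le> C * real (card F)" using FF by linarith
  have "t * real (card P) = (\<Sum>q\<in>P. t)" by simp
  also have "\<dots> \<le> (\<Sum>q\<in>P. norm (f (snd q)) + norm (f (- snd q)))"
    using level by (intro sum_mono) (auto simp: P_def inner_pairs_def)
  also have "\<dots> \<le> 2 * C * real (card F)" using forward backward by (simp add: sum.distrib)
  finally show ?thesis by (simp add: P_def)
qed

lemma cheeger_ge_of_level_subset:
  fixes f :: "'a::group_add \<Rightarrow> complex"
  assumes C: "\<And>F. finite F \<Longrightarrow> (\<Sum>x\<in>F. \<Sum>y\<in>F. norm (f (- x + y))) \<le> C * real (card F)"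
    and A: "finite A" and level: "\<And>s. s \<in> A \<Longrightarrow> t \<le> norm (f s) + norm (f (- s))" and t: "0 < t"
    and S: "finite S" "A \<subseteq> S"
  shows "real (card A) - 2 * C / t \<le> cheeger S"
proof (rule cheeger_greatest)
  fix F :: "'a set" assume F: "finite F" "F \<noteq> {}"
  have "card (boundary A F) \<le> card (boundary S F)"
    using S F(1) by (intro card_mono) (auto simp: boundary_def intro: finite_subset[of _ "F \<times> S"])
  hence "real (card F) * real (card A) \<le> real (card (inner_pairs A F)) + real (card (boundary S F))"
    using card_inner_pairs_add_boundary[OF A F(1)] by (simp flip: of_nat_add of_nat_mult)
  moreover have "real (card (inner_pairs A F)) \<le> 2 * C * real (card F) / t"
    using card_inner_pairs_level_le[OF C F(1) A level] t by (simp add: field_simps)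
  ultimately have "real (card F) * (real (card A) - 2 * C / t) \<le> real (card (boundary S F))"
    by (simp add: algebra_simps)
  thus "real (card A) - 2 * C / t \<le> real (card (boundary S F)) / real (card F)"
    using F by (simp add: field_simps card_gt_0_iff)
qed

lemma card_sym_level_set_le:
  fixes f :: "'a::group_add \<Rightarrow> complex"
  assumes C: "\<And>F. finite F \<Longrightarrow> (\<Sum>x\<in>F. \<Sum>y\<in>F. norm (f (- x + y))) \<le> C * real (card F)" "0 \<le> C"
    and \<theta>: "\<theta> < 1" and S0: "S0 \<in> fin_sym_subsets TYPE('a)"
    and eventually: "\<And>S. S \<in> fin_sym_subsets TYPE('a) \<Longrightarrow> S0 \<subseteq> S \<Longrightarrow> 2 \<le> card S \<Longrightarrow>
                       real (card S) powr (- \<theta>) \<le> e_const S"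
    and A: "A \<in> fin_sym_subsets TYPE('a)"
    and level: "\<And>s. s \<in> A \<Longrightarrow> t \<le> norm (f s) + norm (f (- s))" and t: "0 < t" "t \<le> 1"
  shows "real (card A) powr (1 - \<theta>) \<le> (real (card S0) + 2 * C + 1) / t"
proof -
  define S where "S = A \<union> S0"
  have S: "S \<in> fin_sym_subsets TYPE('a)" using A S0 by (auto simp: S_def fin_sym_subsets_def)
  hence finS: "finite S" by (simp add: fin_sym_subsets_def)
  have finA: "finite A" using A by (simp add: fin_sym_subsets_def)
  have AS: "card A \<le> card S" using finS by (intro card_mono) (auto simp: S_def)
  show ?thesis
  proof (cases "2 \<le> card S")
    case True
    have "real (card A) powr (1 - \<theta>) \<le> real (card S) powr (1 - \<theta>)"
      using AS \<theta> by (intro powr_mono2) auto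
    also have "\<dots> = real (card S) * real (card S) powr (- \<theta>)"
      using True by (simp add: powr_mult_base)
    also have "\<dots> \<le> real (card S) * e_const S"
      using eventually[OF S _ True] by (intro mult_left_mono) (auto simp: S_def)
    also have "\<dots> = real (card S) - cheeger S" using card_mult_e_const[of S] True by simp
    also have "\<dots> \<le> real (card S0) + 2 * C / t"
    proof -
      have "real (card S) \<le> real (card A) + real (card S0)"
        using card_Un_le[of A S0] unfolding S_def by (metis of_nat_add of_nat_le_iff)
      thus ?thesis using cheeger_ge_of_level_subset[OF C(1) finA level t(1) finS] by (simp add: S_def)
    qed
    also have "\<dots> \<le> (real (card S0) + 2 * C + 1) / t"
    proof -
      have "real (card S0) * t \<le> real (card S0)" using t by (simp add: mult_left_le)
      hence "real (card S0) \<le> real (card S0) / t" using t by (simp add: le_divide_eq)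
      moreover have "0 < 1 / t" using t by simp
      ultimately show ?thesis unfolding add_divide_distrib by linarith
    qed
    finally show ?thesis .
  next
    case False
    hence "card A = 0 \<or> card A = 1" using AS by linarith
    hence "real (card A) powr (1 - \<theta>) \<le> 1" by auto
    also have "1 \<le> (real (card S0) + 2 * C + 1) / t"
      using t C(2) by (simp add: field_simps)
    finally show ?thesis .
  qed
qed

lemma level_sets_weak_bound:
  fixes f :: "'a::group_add \<Rightarrow> complex"
  assumes "f \<in> T1 TYPE('a)" and \<theta>: "\<theta> < 1" and S0: "S0 \<in> fin_sym_subsets TYPE('a)"
    and eventually: "\<And>S. S \<in> fin_sym_subsets TYPE('a) \<Longrightarrow> S0 \<subseteq> S \<Longrightarrow> 2 \<le> card S \<Longrightarrow>
                       real (card S) powr (- \<theta>) \<le> e_const S"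
  obtains K where "0 < K"
    "\<And>t. 0 < t \<Longrightarrow> t \<le> 1 \<Longrightarrow> finite {z. t \<le> norm (f z) + norm (f (- z))}
          \<and> real (card {z. t \<le> norm (f z) + norm (f (- z))}) \<le> (K / t) powr (1 / (1 - \<theta>))"
proof -
  obtain C where C: "0 \<le> C" "\<And>F. finite F \<Longrightarrow> (\<Sum>x\<in>F. \<Sum>y\<in>F. norm (f (- x + y))) \<le> C * real (card F)"
    using T1_double_sum_bound[OF assms(1)] by blast
  define K where "K = real (card S0) + 2 * C + 1"
  have "finite {z. t \<le> norm (f z) + norm (f (- z))}
        \<and> real (card {z. t \<le> norm (f z) + norm (f (- z))}) \<le> (K / t) powr (1 / (1 - \<theta>))"
    if t: "0 < t" "t \<le> 1" for t
  proof -
    have "card B \<le> nat \<lfloor>(K / t) powr (1 / (1 - \<theta>))\<rfloor>"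
      if B: "B \<subseteq> {z. t \<le> norm (f z) + norm (f (- z))}" "finite B" for B
    proof -
      define A where "A = B \<union> uminus ` B"
      have A: "A \<in> fin_sym_subsets TYPE('a)" using B by (auto simp: A_def fin_sym_subsets_def)
      have "real (card A) powr (1 - \<theta>) \<le> K / t"
        unfolding K_def
      proof (rule card_sym_level_set_le[OF C(2,1) \<theta> S0 eventually A _ t])
        fix s assume "s \<in> A"
        thus "t \<le> norm (f s) + norm (f (- s))"
          using B(1) unfolding A_def by (auto simp: add.commute)
      qed
      hence "(real (card A) powr (1 - \<theta>)) powr (1 / (1 - \<theta>)) \<le> (K / t) powr (1 / (1 - \<theta>))"
        using \<theta> by (intro powr_mono2) auto
      hence "real (card A) \<le> (K / t) powr (1 / (1 - \<theta>))"
        using \<theta> by (cases "card A = 0") (auto simp: powr_powr)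
      moreover have "card B \<le> card A" using A by (intro card_mono) (auto simp: A_def fin_sym_subsets_def)
      ultimately show ?thesis by (intro le_nat_floor) linarith
    qed
    hence "finite {z. t \<le> norm (f z) + norm (f (- z))}
        \<and> card {z. t \<le> norm (f z) + norm (f (- z))} \<le> nat \<lfloor>(K / t) powr (1 / (1 - \<theta>))\<rfloor>"
      by (intro finite_if_finite_subsets_card_bdd)
    moreover have "real (nat \<lfloor>(K / t) powr (1 / (1 - \<theta>))\<rfloor>) \<le> (K / t) powr (1 / (1 - \<theta>))"
      by (rule of_nat_floor) simp
    ultimately show ?thesis by (meson of_nat_mono order_trans)
  qed
  moreover have "0 < K" using C(1) by (simp add: K_def)
  ultimately show thesis using that by blast
qed

lemma exists_dyadic_index:
  fixes x :: real
  assumes "0 < x" "x \<le> 1"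
  shows "\<exists>k. (1/2) ^ Suc k < x \<and> x \<le> (1/2) ^ k"
proof -
  obtain n where "(1/2::real) ^ n < x" using real_arch_pow_inv[of x "1/2"] assms by auto
  moreover have "(1/2::real) ^ Suc n \<le> (1/2) ^ n" by simp
  ultimately have ex: "\<exists>n. (1/2::real) ^ Suc n < x" by (meson le_less_trans)
  define k where "k = (LEAST n. (1/2::real) ^ Suc n < x)"
  have "(1/2) ^ Suc k < x" unfolding k_def by (rule LeastI_ex[OF ex])
  moreover have "x \<le> (1/2) ^ k"
  proof (cases k)
    case (Suc m)
    hence "m < k" by simp
    hence "\<not> (1/2::real) ^ Suc m < x" unfolding k_def by (rule not_less_Least)
    thus ?thesis using Suc by simp
  qed (use assms in simp)
  ultimately show ?thesis by blast
qed

lemma dyadic_powr_eq: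
  fixes K p q :: real
  assumes "0 < K"
  shows "(K / (1/2) ^ Suc k) powr q * ((1/2) ^ k) powr p = K powr q * 2 powr q * (2 powr (q - p)) ^ k"
proof -
  have half: "(1/2::real) ^ j = 2 powr (- real j)" for j
    by (simp add: powr_minus powr_realpow power_one_over inverse_eq_divide)
  have "(K / (1/2) ^ Suc k) powr q = K powr q * 2 powr q * 2 powr (real k * q)"
    using assms by (simp add: half powr_minus_divide powr_mult powr_powr powr_add distrib_right)
  moreover have "((1/2::real) ^ k) powr p = 2 powr (- (real k * p))"
    by (simp add: half powr_powr)
  moreover have "(2 powr (q - p)) ^ k = 2 powr (real k * q) * 2 powr (- (real k * p))"
    by (simp add: powr_realpow[symmetric] powr_powr powr_add[symmetric] right_diff_distrib mult.commute)
  ultimately show ?thesis by simp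
qed

text \<open>The dyadic layer \<open>2\<^sup>-\<^sup>k\<^sup>-\<^sup>1 < h \<le> 2\<^sup>-\<^sup>k\<close> lies in \<open>{h \<ge> 2\<^sup>-\<^sup>k\<^sup>-\<^sup>1}\<close>, so it contributes at most
  \<open>(2\<^sup>k\<^sup>+\<^sup>1 K)\<^sup>q 2\<^sup>-\<^sup>k\<^sup>p = (2K)\<^sup>q 2\<^sup>(\<^sup>q\<^sup>-\<^sup>p\<^sup>)\<^sup>k\<close>.\<close>

lemma sum_powr_small_le_of_weak_bound:
  fixes h :: "'b \<Rightarrow> real"
  assumes q: "0 < q" "q < p" and K: "0 < K"
    and weak: "\<And>t. 0 < t \<Longrightarrow> t \<le> 1 \<Longrightarrow> finite {z. t \<le> h z} \<and> real (card {z. t \<le> h z}) \<le> (K / t) powr q"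
    and B: "finite B" "\<And>z. z \<in> B \<Longrightarrow> 0 < h z \<and> h z < 1"
  shows "(\<Sum>z\<in>B. h z powr p) \<le> K powr q * 2 powr q / (1 - 2 powr (q - p))"
proof -
  have "2 powr (q - p) < 2 powr 0" using q by (intro powr_less_mono) auto
  hence \<rho>: "0 \<le> 2 powr (q - p)" "2 powr (q - p) < 1" by auto
  have "\<forall>z\<in>B. \<exists>k. (1/2) ^ Suc k < h z \<and> h z \<le> (1/2) ^ k"
    using exists_dyadic_index B(2) by (meson less_imp_le)
  then obtain \<kappa> where \<kappa>: "\<forall>z\<in>B. (1/2) ^ Suc (\<kappa> z) < h z \<and> h z \<le> (1/2) ^ \<kappa> z"
    by (rule bchoice[THEN exE])
  show ?thesis
  proof (rule sum_le_by_geometric_layers[where \<kappa> = \<kappa>])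
    fix k
    define L where "L = {z. (1/2) ^ Suc k \<le> h z}"
    have "0 < (1/2::real) ^ Suc k" "(1/2::real) ^ Suc k \<le> 1"
      by (simp, rule power_le_one) auto
    hence L: "finite L" "real (card L) \<le> (K / (1/2) ^ Suc k) powr q"
      using weak unfolding L_def by blast+
    have "{z \<in> B. \<kappa> z = k} \<subseteq> L" using \<kappa> by (auto simp: L_def less_imp_le)
    hence "card {z \<in> B. \<kappa> z = k} \<le> card L" using L(1) by (rule card_mono[rotated])
    have "(\<Sum>z\<in>{z \<in> B. \<kappa> z = k}. h z powr p) \<le> (\<Sum>z\<in>{z \<in> B. \<kappa> z = k}. ((1/2) ^ k) powr p)"
      using \<kappa> B(2) q by (intro sum_mono powr_mono2) (auto simp: less_imp_le)
    also have "\<dots> \<le> real (card L) * ((1/2) ^ k) powr p"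
      using \<open>card {z \<in> B. \<kappa> z = k} \<le> card L\<close> by (simp add: mult_right_mono)
    also have "\<dots> \<le> (K / (1/2) ^ Suc k) powr q * ((1/2) ^ k) powr p"
      using L(2) by (rule mult_right_mono) simp
    also have "\<dots> = K powr q * 2 powr q * (2 powr (q - p)) ^ k"
      using K by (rule dyadic_powr_eq)
    finally show "(\<Sum>z\<in>{z \<in> B. \<kappa> z = k}. h z powr p) \<le> K powr q * 2 powr q * (2 powr (q - p)) ^ k" .
  qed (use B \<rho> in auto)
qed

lemma summable_powr_of_weak_bound:
  fixes h :: "'b \<Rightarrow> real"
  assumes nonneg: "\<And>z. 0 \<le> h z" and q: "0 < q" "q < p" and K: "0 < K"
    and weak: "\<And>t. 0 < t \<Longrightarrow> t \<le> 1 \<Longrightarrow> finite {z. t \<le> h z} \<and> real (card {z. t \<le> h z}) \<le> (K / t) powr q"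
  shows "(\<lambda>z. h z powr p) summable_on UNIV"
proof -
  define B0 where "B0 = (\<Sum>z\<in>{z. 1 \<le> h z}. h z powr p) + K powr q * 2 powr q / (1 - 2 powr (q - p))"
  have "(\<Sum>z\<in>B. h z powr p) \<le> B0" if B: "finite B" for B
  proof -
    have "(\<Sum>z\<in>B. h z powr p) = (\<Sum>z\<in>{z \<in> B. 1 \<le> h z}. h z powr p) + (\<Sum>z\<in>{z \<in> B. h z < 1}. h z powr p)"
      using B by (subst sum.union_disjoint[symmetric]) (auto intro: sum.cong)
    also have "(\<Sum>z\<in>{z \<in> B. h z < 1}. h z powr p) = (\<Sum>z\<in>{z \<in> B. 0 < h z \<and> h z < 1}. h z powr p)"
      using B nonneg by (intro sum.mono_neutral_cong_right) (auto simp: order.order_iff_strict)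
    also have "(\<Sum>z\<in>{z \<in> B. 1 \<le> h z}. h z powr p) \<le> (\<Sum>z\<in>{z. 1 \<le> h z}. h z powr p)"
      using weak[of 1] by (intro sum_mono2) auto
    also have "(\<Sum>z\<in>{z \<in> B. 0 < h z \<and> h z < 1}. h z powr p) \<le> K powr q * 2 powr q / (1 - 2 powr (q - p))"
      using B by (intro sum_powr_small_le_of_weak_bound[OF q K weak]) auto
    finally show ?thesis unfolding B0_def by simp
  qed
  thus ?thesis
    by (intro nonneg_bdd_above_summable_on) (auto intro!: bdd_aboveI[of _ B0])
qed

lemma T1_subset_lp_of_eventually:
  fixes \<theta> p :: real
  assumes \<theta>: "\<theta> < 1" and p: "1 < p * (1 - \<theta>)" and S0: "S0 \<in> fin_sym_subsets TYPE('a::group_add)"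
    and eventually: "\<And>S. S \<in> fin_sym_subsets TYPE('a) \<Longrightarrow> S0 \<subseteq> S \<Longrightarrow> 2 \<le> card S \<Longrightarrow>
                       real (card S) powr (- \<theta>) \<le> e_const S"
  shows "T1 TYPE('a) \<subseteq> lp_space p"
proof
  fix f :: "'a \<Rightarrow> complex" assume "f \<in> T1 TYPE('a)"
  then obtain K where K: "0 < K"
    and weak: "\<And>t. 0 < t \<Longrightarrow> t \<le> 1 \<Longrightarrow> finite {z. t \<le> norm (f z) + norm (f (- z))}
          \<and> real (card {z. t \<le> norm (f z) + norm (f (- z))}) \<le> (K / t) powr (1 / (1 - \<theta>))"
    using level_sets_weak_bound[OF _ \<theta> S0 eventually] by blast
  have q: "0 < 1 / (1 - \<theta>)" "1 / (1 - \<theta>) < p" using \<theta> p by (auto simp: field_simps)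
  hence "0 \<le> p" by linarith
  have "(\<lambda>z. (norm (f z) + norm (f (- z))) powr p) summable_on UNIV"
    by (rule summable_powr_of_weak_bound[OF _ q K weak]) auto
  moreover have "norm (f z) powr p \<le> (norm (f z) + norm (f (- z))) powr p" for z
    using \<open>0 \<le> p\<close> by (intro powr_mono2) auto
  ultimately have "(\<lambda>z. norm (f z) powr p) summable_on UNIV"
    by (rule summable_on_comparison_test) auto
  thus "f \<in> lp_space p" by (simp add: lp_space_def)
qed

section \<open>Bounds for \<open>Lit\<close> and the exponent \<open>\<eta>\<close>\<close>

lemma Lit_ge:
  assumes "\<And>p. 0 < p \<Longrightarrow> T1 TYPE('a::group_add) \<subseteq> lp_space p \<Longrightarrow> q \<le> p"
  shows "ereal q \<le> Lit TYPE('a)"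
  unfolding Lit_def using assms by (auto intro!: Inf_greatest)

lemma Lit_le:
  assumes "\<And>p. q < p \<Longrightarrow> 0 < p \<and> T1 TYPE('a::group_add) \<subseteq> lp_space p"
  shows "Lit TYPE('a) \<le> ereal q"
proof (rule ereal_le_epsilon2)
  fix e :: real assume "0 < e"
  hence "Lit TYPE('a) \<le> ereal (q + e)"
    using assms[of "q + e"] unfolding Lit_def by (auto intro!: Inf_lower)
  thus "Lit TYPE('a) \<le> ereal q + ereal e" by simp
qed

lemma Lit_finite:
  assumes "finite (UNIV :: 'a::group_add set)"
  shows "Lit TYPE('a) = 0"
proof -
  have "Lit TYPE('a) \<le> ereal 0"
    by (rule Lit_le) (auto simp: lp_space_def assms intro: summable_on_finite)
  moreover have "ereal 0 \<le> Lit TYPE('a)" by (rule Lit_ge) simp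
  ultimately show ?thesis by (simp add: zero_ereal_def)
qed

lemma Lit_ge_of_cofinal:
  assumes "infinite (UNIV :: 'a::group_add set)" and "\<theta> < 1"
    and cofinal: "\<forall>S0\<in>fin_sym_subsets TYPE('a). \<exists>S\<in>fin_sym_subsets TYPE('a).
                   S0 \<subseteq> S \<and> e_const S \<le> real (card S) powr (- \<theta>)"
  shows "ereal (1 / (1 - \<theta>)) \<le> Lit TYPE('a)"
proof (rule Lit_ge)
  fix p :: real assume "0 < p" "T1 TYPE('a) \<subseteq> lp_space p"
  hence "\<not> p * (1 - \<theta>) < 1" using not_T1_subset_lp_of_cofinal[OF assms(1) _ _ cofinal] by blast
  thus "1 / (1 - \<theta>) \<le> p" using assms(2) by (simp add: field_simps)
qed

lemma Lit_ge_one: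
  assumes "infinite (UNIV :: 'a::group_add set)"
  shows "1 \<le> Lit TYPE('a)"
proof -
  have "\<exists>S\<in>fin_sym_subsets TYPE('a). S0 \<subseteq> S \<and> e_const S \<le> real (card S) powr (- 0)"
    if "S0 \<in> fin_sym_subsets TYPE('a)" for S0
  proof (intro bexI conjI)
    show "insert 0 S0 \<in> fin_sym_subsets TYPE('a)" using that by (auto simp: fin_sym_subsets_def)
    thus "e_const (insert 0 S0) \<le> real (card (insert 0 S0)) powr (- 0)"
      using e_const_le_one[of "insert 0 S0"] by (simp add: fin_sym_subsets_def)
  qed auto
  thus ?thesis using Lit_ge_of_cofinal[OF assms, of 0] by (simp add: one_ereal_def)
qed

lemma Lit_le_of_eventually:
  assumes "\<theta> < 1" and S0: "S0 \<in> fin_sym_subsets TYPE('a::group_add)"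
    and eventually: "\<And>S. S \<in> fin_sym_subsets TYPE('a) \<Longrightarrow> S0 \<subseteq> S \<Longrightarrow> 2 \<le> card S \<Longrightarrow>
                       real (card S) powr (- \<theta>) \<le> e_const S"
  shows "Lit TYPE('a) \<le> ereal (1 / (1 - \<theta>))"
proof (rule Lit_le)
  fix p :: real assume p: "1 / (1 - \<theta>) < p"
  moreover have "0 < 1 / (1 - \<theta>)" using assms(1) by simp
  ultimately have "0 < p" by linarith
  moreover have "1 < p * (1 - \<theta>)" using p assms(1) by (simp add: field_simps)
  ultimately show "0 < p \<and> T1 TYPE('a) \<subseteq> lp_space p"
    using T1_subset_lp_of_eventually[OF assms(1) _ S0 eventually] by blast
qed

definition cheeger_exponent :: "'a::group_add set \<Rightarrow> real" where
  "cheeger_exponent S = ln (e_const S) / ln (real (card S))"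

definition liminf_cheeger_exponent :: "'a::group_add itself \<Rightarrow> ereal" where
  "liminf_cheeger_exponent G = (SUP S\<in>fin_sym_subsets G. INF S'\<in>{S' \<in> fin_sym_subsets G. S \<subseteq> S'}.
      ereal (cheeger_exponent S'))"

lemma eta_eq_uminus_liminf:
  "infinite (UNIV :: 'a::group_add set) \<Longrightarrow> eta TYPE('a) = - liminf_cheeger_exponent TYPE('a)"
  by (simp add: eta_def liminf_cheeger_exponent_def cheeger_exponent_def)

text \<open>For \<open>|S| \<le> 1\<close> the exponent is \<open>0\<close>: either \<open>e = 1\<close>, or the denominator \<open>ln 1\<close> vanishes.\<close>

lemma cheeger_exponent_small:
  assumes "finite S" "card S \<le> 1"
  shows "cheeger_exponent S = 0"
proof -
  have "card S = 0 \<or> card S = 1" using assms(2) by linarith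
  thus ?thesis by (auto simp: cheeger_exponent_def e_const_def)
qed

lemma cheeger_exponent_bounds:
  assumes "S \<in> fin_sym_subsets TYPE('a::group_add)"
  shows "-1 \<le> cheeger_exponent S \<and> cheeger_exponent S \<le> 0"
proof (cases "2 \<le> card S")
  case True
  hence ne: "S \<noteq> {}" by auto
  have pos: "0 < e_const S" by (rule e_const_pos[OF assms ne])
  have "ln (e_const S) \<le> 0" using pos e_const_le_one[of S] by simp
  moreover have "ln (1 / real (card S)) \<le> ln (e_const S)"
    using e_const_ge_inverse_card[OF assms ne] True pos by simp
  hence "- ln (real (card S)) \<le> ln (e_const S)" using True by (simp add: ln_div)
  moreover have "0 < ln (real (card S))" using True by simp
  ultimately show ?thesis by (simp add: cheeger_exponent_def field_simps)
next
  case False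
  thus ?thesis using assms cheeger_exponent_small[of S] by (simp add: fin_sym_subsets_def)
qed

lemma cheeger_exponent_less_imp:
  assumes "S \<in> fin_sym_subsets TYPE('a::group_add)" "2 \<le> card S" "cheeger_exponent S < a"
  shows "e_const S < real (card S) powr a"
proof -
  have "S \<noteq> {}" using assms(2) by auto
  hence "0 < e_const S" by (rule e_const_pos[OF assms(1)])
  moreover have "ln (e_const S) < a * ln (real (card S))"
    using assms(2,3) by (simp add: cheeger_exponent_def divide_less_eq)
  moreover have "ln (real (card S) powr a) = a * ln (real (card S))"
    using assms(2) by (simp add: ln_powr)
  moreover have "0 < real (card S) powr a" using assms(2) by simp
  ultimately show ?thesis by (metis ln_less_cancel_iff)
qed

lemma less_cheeger_exponent_imp:
  assumes "S \<in> fin_sym_subsets TYPE('a::group_add)" "2 \<le> card S" "a < cheeger_exponent S"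
  shows "real (card S) powr a < e_const S"
proof -
  have "S \<noteq> {}" using assms(2) by auto
  hence "0 < e_const S" by (rule e_const_pos[OF assms(1)])
  moreover have "a * ln (real (card S)) < ln (e_const S)"
    using assms(2,3) by (simp add: cheeger_exponent_def less_divide_eq)
  moreover have "ln (real (card S) powr a) = a * ln (real (card S))"
    using assms(2) by (simp add: ln_powr)
  moreover have "0 < real (card S) powr a" using assms(2) by simp
  ultimately show ?thesis by (metis ln_less_cancel_iff)
qed

lemma liminf_cheeger_exponent_bounds:
  "-1 \<le> liminf_cheeger_exponent TYPE('a::group_add) \<and> liminf_cheeger_exponent TYPE('a) \<le> 0"
proof
  have "{} \<in> fin_sym_subsets TYPE('a)" by (simp add: fin_sym_subsets_def)
  thus "-1 \<le> liminf_cheeger_exponent TYPE('a)"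
    unfolding liminf_cheeger_exponent_def using cheeger_exponent_bounds
    by (intro SUP_upper2[of "{}"] INF_greatest) (auto simp: one_ereal_def)
  show "liminf_cheeger_exponent TYPE('a) \<le> 0"
    unfolding liminf_cheeger_exponent_def using cheeger_exponent_bounds
    by (intro SUP_least INF_lower2) (auto simp: zero_ereal_def)
qed

lemma cofinal_of_liminf_less:
  assumes "0 \<le> \<theta>" "liminf_cheeger_exponent TYPE('a::group_add) < ereal (- \<theta>)"
  shows "\<forall>S0\<in>fin_sym_subsets TYPE('a). \<exists>S\<in>fin_sym_subsets TYPE('a).
           S0 \<subseteq> S \<and> e_const S \<le> real (card S) powr (- \<theta>)"
proof
  fix S0 assume S0: "S0 \<in> fin_sym_subsets TYPE('a)"
  have "(INF S\<in>{S \<in> fin_sym_subsets TYPE('a). S0 \<subseteq> S}. ereal (cheeger_exponent S))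
      < ereal (- \<theta>)"
    using S0 assms(2) unfolding liminf_cheeger_exponent_def by (meson SUP_upper le_less_trans)
  then obtain S where S: "S \<in> fin_sym_subsets TYPE('a)" "S0 \<subseteq> S" "cheeger_exponent S < - \<theta>"
    by (auto simp: INF_less_iff)
  have "2 \<le> card S"
  proof (rule ccontr)
    assume "\<not> 2 \<le> card S"
    thus False using S assms(1) cheeger_exponent_small[of S] by (simp add: fin_sym_subsets_def)
  qed
  thus "\<exists>S\<in>fin_sym_subsets TYPE('a). S0 \<subseteq> S \<and> e_const S \<le> real (card S) powr (- \<theta>)"
    using S cheeger_exponent_less_imp[OF S(1)] by (auto intro!: less_imp_le)
qed

lemma eventually_of_less_liminf:
  assumes "ereal (- \<theta>) < liminf_cheeger_exponent TYPE('a::group_add)"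
  obtains S0 where "S0 \<in> fin_sym_subsets TYPE('a)"
    "\<And>S. S \<in> fin_sym_subsets TYPE('a) \<Longrightarrow> S0 \<subseteq> S \<Longrightarrow> 2 \<le> card S \<Longrightarrow>
       real (card S) powr (- \<theta>) \<le> e_const S"
proof -
  obtain S0 where S0: "S0 \<in> fin_sym_subsets TYPE('a)"
    and less: "ereal (- \<theta>) < (INF S\<in>{S \<in> fin_sym_subsets TYPE('a). S0 \<subseteq> S}. ereal (cheeger_exponent S))"
    using assms unfolding liminf_cheeger_exponent_def by (auto simp: less_SUP_iff)
  have "real (card S) powr (- \<theta>) \<le> e_const S"
    if "S \<in> fin_sym_subsets TYPE('a)" "S0 \<subseteq> S" "2 \<le> card S" for S
  proof -
    have "(INF S\<in>{S \<in> fin_sym_subsets TYPE('a). S0 \<subseteq> S}. ereal (cheeger_exponent S))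
        \<le> ereal (cheeger_exponent S)"
      using that by (intro INF_lower) simp
    with less have "ereal (- \<theta>) < ereal (cheeger_exponent S)" by (rule order.strict_trans2)
    thus ?thesis using less_cheeger_exponent_imp[OF that(1,3), of "- \<theta>"] by simp
  qed
  thus thesis using S0 that by blast
qed

lemma Lit_ge_of_liminf_less:
  assumes "infinite (UNIV :: 'a::group_add set)" "0 \<le> \<theta>"
    and "liminf_cheeger_exponent TYPE('a) < ereal (- \<theta>)"
  shows "ereal (1 / (1 - \<theta>)) \<le> Lit TYPE('a)"
proof (rule Lit_ge_of_cofinal[OF assms(1) _ cofinal_of_liminf_less[OF assms(2,3)]])
  show "\<theta> < 1" using assms(3) liminf_cheeger_exponent_bounds[where 'a = 'a]
    by (cases "liminf_cheeger_exponent TYPE('a)") (auto simp: one_ereal_def)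
qed

lemma Lit_le_of_less_liminf:
  assumes "ereal (- \<theta>) < liminf_cheeger_exponent TYPE('a::group_add)" "\<theta> < 1"
  shows "Lit TYPE('a) \<le> ereal (1 / (1 - \<theta>))"
proof (rule eventually_of_less_liminf[OF assms(1)])
  fix S0 assume "S0 \<in> fin_sym_subsets TYPE('a)"
    "\<And>S. S \<in> fin_sym_subsets TYPE('a) \<Longrightarrow> S0 \<subseteq> S \<Longrightarrow> 2 \<le> card S \<Longrightarrow>
       real (card S) powr (- \<theta>) \<le> e_const S"
  thus ?thesis by (rule Lit_le_of_eventually[OF assms(2)])
qed

text \<open>The two bounds pin down \<open>\<eta>\<close> because \<open>\<theta> \<mapsto> 1 / (1 - \<theta>)\<close> is an increasing bijection from
  \<open>[0, 1)\<close> onto \<open>[1, \<infinity>)\<close>.\<close>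

lemma eq_one_minus_inverse_of_bounds:
  fixes \<eta> :: real and L :: ereal
  assumes \<eta>: "0 \<le> \<eta>" "\<eta> \<le> 1" and L: "1 \<le> L"
    and below: "\<And>\<theta>. 0 \<le> \<theta> \<Longrightarrow> \<theta> < \<eta> \<Longrightarrow> ereal (1 / (1 - \<theta>)) \<le> L"
    and above: "\<And>\<theta>. \<eta> < \<theta> \<Longrightarrow> \<theta> < 1 \<Longrightarrow> L \<le> ereal (1 / (1 - \<theta>))"
  shows "ereal \<eta> = 1 - 1 / L"
proof (cases L)
  case PInf
  have "\<eta> = 1"
  proof (rule ccontr)
    assume "\<eta> \<noteq> 1"
    hence "L \<le> ereal (1 / (1 - (\<eta> + 1) / 2))" using \<eta> by (intro above) auto
    thus False using PInf by simp
  qed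
  thus ?thesis using PInf by (simp add: divide_ereal_def)
next
  case MInf
  thus ?thesis using L by simp
next
  case (real l)
  have l: "1 \<le> l" using L real by (simp add: one_ereal_def)
  define m where "m = 1 - 1 / l"
  have m: "0 \<le> m" "m < 1" "l = 1 / (1 - m)" using l by (auto simp: m_def)
  have "\<not> \<eta> < m"
  proof
    assume "\<eta> < m"
    hence "l \<le> 1 / (1 - (\<eta> + m) / 2)" using above[of "(\<eta> + m) / 2"] m real by simp
    moreover have "1 / (1 - (\<eta> + m) / 2) < 1 / (1 - m)"
      using \<open>\<eta> < m\<close> m by (intro divide_strict_left_mono) auto
    ultimately show False using m by simp
  qed
  moreover have "\<not> m < \<eta>"
  proof
    assume "m < \<eta>"
    hence "1 / (1 - (\<eta> + m) / 2) \<le> l" using below[of "(\<eta> + m) / 2"] m real by simp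
    moreover have "1 / (1 - m) < 1 / (1 - (\<eta> + m) / 2)"
      using \<open>m < \<eta>\<close> m \<eta> by (intro divide_strict_left_mono) auto
    ultimately show False using m by simp
  qed
  ultimately show ?thesis using real l by (simp add: one_ereal_def m_def)
qed

theorem theorem1p4:
  shows "eta TYPE('a::group_add) = 1 - 1 / Lit TYPE('a)"
proof (cases "finite (UNIV :: 'a set)")
  case True
  \<comment> \<open>both sides are \<open>-\<infinity>\<close>, since \<open>1 / 0 = \<infinity>\<close> in \<open>ereal\<close>\<close>
  thus ?thesis using Lit_finite[OF True] by (simp add: eta_def divide_ereal_def one_ereal_def)
next
  case False
  obtain l where l: "liminf_cheeger_exponent TYPE('a) = ereal l" "-1 \<le> l" "l \<le> 0"
    using liminf_cheeger_exponent_bounds[where 'a = 'a]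
    by (cases "liminf_cheeger_exponent TYPE('a)") (auto simp: one_ereal_def)
  have "ereal (- l) = 1 - 1 / Lit TYPE('a)"
  proof (rule eq_one_minus_inverse_of_bounds)
    show "0 \<le> - l" "- l \<le> 1" "1 \<le> Lit TYPE('a)" using l Lit_ge_one[OF False] by auto
    show "ereal (1 / (1 - \<theta>)) \<le> Lit TYPE('a)" if "0 \<le> \<theta>" "\<theta> < - l" for \<theta>
      using that l by (intro Lit_ge_of_liminf_less[OF False]) auto
    show "Lit TYPE('a) \<le> ereal (1 / (1 - \<theta>))" if "- l < \<theta>" "\<theta> < 1" for \<theta>
      using that l by (intro Lit_le_of_less_liminf) auto
  qed
  thus ?thesis using eta_eq_uminus_liminf[OF False] l by simp
qed

end
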